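(* Let $\mathcal{X}=\{x_k\}_{k=1}^m$ be a frame for $\mathbb{C}^n$. Then the following are equivalent: (1) $\mathcal{X}$ is injective; (2) the vectors $\{\tilde{x}_k\}_{k=1}^m$ span $\mathbb{R}^{n^2}$.
   Context: A family $\{x_k\}$ of vectors in a Hilbert space is called injective if whenever a self-adjoint operator $T$ satisfies $\langle Tx_k,x_k\rangle=0$ for all $k$, then $T=0$. For $x=(x_1,\dots,x_n)\in\mathbb{C}^n$ define $\tilde{x}\in\mathbb{R}^{n^2}$ by $\tilde{x}=(|x_1|^2,\mathrm{Re}(\bar{x}_1x_2),\mathrm{Im}(\bar{x}_1x_2),\dots,\mathrm{Re}(\bar{x}_1x_n),\mathrm{Im}(\bar{x}_1x_n);\ |x_2|^2,\mathrm{Re}(\bar{x}_2x_3),\mathrm{Im}(\bar{x}_2x_3),\dots,\mathrm{Re}(\bar{x}_2x_n),\mathrm{Im}(\bar{x}_2x_n);\ \dots;\ |x_{n-1}|^2,\mathrm{Re}(\bar{x}_{n-1}x_n),\mathrm{Im}(\bar{x}_{n-1}x_n);\ |x_n|^2)$. *)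

theory Defs
  imports "HOL-Analysis.Analysis"
begin

text \<open>Vectors of C^n are functions nat => complex, only coordinates
  i < n (0-based) being relevant. A family {x_k}, k = 1..m, is a function
  x :: nat => nat => complex, with x k the k-th vector (0-based, k < m).
  Operators on C^n are n x n complex matrices T :: nat => nat => complex
  (entries T i j, i, j < n). Vectors of R^(n^2) are functions nat => real
  supported on {0..<n^2}.\<close>

definition cinner_n :: "nat \<Rightarrow> (nat \<Rightarrow> complex) \<Rightarrow> (nat \<Rightarrow> complex) \<Rightarrow> complex" where
  "cinner_n n u v = (\<Sum>i<n. u i * cnj (v i))"

definition cnorm2_n :: "nat \<Rightarrow> (nat \<Rightarrow> complex) \<Rightarrow> real" where
  "cnorm2_n n u = (\<Sum>i<n. (cmod (u i))\<^sup>2)"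

definition is_frame :: "nat \<Rightarrow> nat \<Rightarrow> (nat \<Rightarrow> nat \<Rightarrow> complex) \<Rightarrow> bool" where
  "is_frame n m x \<longleftrightarrow> (\<exists>A B. 0 < A \<and> A \<le> B \<and>
     (\<forall>y. A * cnorm2_n n y \<le> (\<Sum>k<m. (cmod (cinner_n n y (x k)))\<^sup>2) \<and>
          (\<Sum>k<m. (cmod (cinner_n n y (x k)))\<^sup>2) \<le> B * cnorm2_n n y))"

definition mat_apply :: "nat \<Rightarrow> (nat \<Rightarrow> nat \<Rightarrow> complex) \<Rightarrow> (nat \<Rightarrow> complex) \<Rightarrow> (nat \<Rightarrow> complex)" where
  "mat_apply n T u = (\<lambda>i. \<Sum>j<n. T i j * u j)"

definition self_adjoint_n :: "nat \<Rightarrow> (nat \<Rightarrow> nat \<Rightarrow> complex) \<Rightarrow> bool" where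
  "self_adjoint_n n T \<longleftrightarrow> (\<forall>i<n. \<forall>j<n. T i j = cnj (T j i))"

definition injective_family :: "nat \<Rightarrow> nat \<Rightarrow> (nat \<Rightarrow> nat \<Rightarrow> complex) \<Rightarrow> bool" where
  "injective_family n m x \<longleftrightarrow>
     (\<forall>T. self_adjoint_n n T \<longrightarrow> (\<forall>k<m. cinner_n n (mat_apply n T (x k)) (x k) = 0)
          \<longrightarrow> (\<forall>i<n. \<forall>j<n. T i j = 0))"

text \<open>Coordinates of x-tilde (0-based). The block belonging to index i starts at
  i*(2n-i); it contains |x_i|^2 followed by Re(conj x_i x_j), Im(conj x_i x_j), j = i+1..n-1.\<close>
definition diag_pos :: "nat \<Rightarrow> nat \<Rightarrow> nat" where
  "diag_pos n i = i * (2 * n - i)"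

definition re_pos :: "nat \<Rightarrow> nat \<Rightarrow> nat \<Rightarrow> nat" where
  "re_pos n i j = diag_pos n i + 2 * (j - i) - 1"

definition im_pos :: "nat \<Rightarrow> nat \<Rightarrow> nat \<Rightarrow> nat" where
  "im_pos n i j = diag_pos n i + 2 * (j - i)"

definition xtilde :: "nat \<Rightarrow> (nat \<Rightarrow> complex) \<Rightarrow> nat \<Rightarrow> real" where
  "xtilde n u p = (\<Sum>i<n. (if p = diag_pos n i then (cmod (u i))\<^sup>2 else 0)
      + (\<Sum>j\<in>{i<..<n}. (if p = re_pos n i j then Re (cnj (u i) * u j) else 0)
                      + (if p = im_pos n i j then Im (cnj (u i) * u j) else 0)))"

definition spans_Rn2 :: "nat \<Rightarrow> nat \<Rightarrow> (nat \<Rightarrow> nat \<Rightarrow> real) \<Rightarrow> bool" where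
  "spans_Rn2 n m v \<longleftrightarrow> (\<forall>w::nat \<Rightarrow> real. (\<forall>p\<ge>n^2. w p = 0) \<longrightarrow>
      (\<exists>c::nat \<Rightarrow> real. \<forall>p<n^2. w p = (\<Sum>k<m. c k * v k p)))"

end

(* A self-adjoint T on C^n corresponds to the real vector of R^(n^2) that carries Re T_ii at the
   position of |x_i|^2 and 2 Re T_ij, -2 Im T_ij (i < j) at the positions of Re (conj x_i x_j) and
   Im (conj x_i x_j); this correspondence is onto R^(n^2), and it turns <T x, x> into the Euclidean
   pairing with x-tilde. So the x_k are injective iff no nonzero vector of R^(n^2) is orthogonal to
   all x-tilde_k, and by the Gram matrix argument this means that the x-tilde_k span R^(n^2). *)

theory Submission
  imports Defs "Jordan_Normal_Form.Determinant"
begin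

no_notation Finite_Cartesian_Product.vec_nth (infixl "$" 90)

lemma mult_mat_vec_surj_if_kernel_trivial:
  fixes A :: "'a :: field mat"
  assumes A: "A \<in> carrier_mat N N"
    and kernel: "\<And>z. z \<in> carrier_vec N \<Longrightarrow> A *\<^sub>v z = 0\<^sub>v N \<Longrightarrow> z = 0\<^sub>v N"
    and b: "b \<in> carrier_vec N"
  obtains z where "z \<in> carrier_vec N" "A *\<^sub>v z = b"
proof -
  have "det A \<noteq> 0"
    using det_0_iff_vec_prod_zero_field[OF A] kernel by auto
  then obtain B where B: "B \<in> carrier_mat N N" "A * B = 1\<^sub>m N"
    using det_non_zero_imp_unit[OF A, of "()"] by (auto simp: Units_def ring_mat_def)
  have "A *\<^sub>v (B *\<^sub>v b) = b"
    using A B b by (simp flip: assoc_mult_mat_vec)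
  with B b show thesis
    using that by (meson mult_mat_vec_carrier)
qed

lemma span_if_orthogonal_complement_trivial:
  fixes v :: "nat \<Rightarrow> nat \<Rightarrow> real"
  assumes orth: "\<And>t. \<forall>k<m. (\<Sum>p<N. t p * v k p) = 0 \<Longrightarrow> \<forall>p<N. t p = 0"
  shows "\<exists>c. \<forall>p<N. w p = (\<Sum>k<m. c k * v k p)"
proof -
  define G :: "real mat" where "G = mat N N (\<lambda>(p, q). \<Sum>k<m. v k p * v k q)"
  have G: "G \<in> carrier_mat N N"
    unfolding G_def by simp
  have G_mult: "(G *\<^sub>v z) $ p = (\<Sum>k<m. (\<Sum>q<N. v k q * z $ q) * v k p)"
    if "p < N" "z \<in> carrier_vec N" for p z
    using that unfolding G_def
    by (simp add: scalar_prod_def row_def lessThan_atLeast0 sum_distrib_left sum_distrib_right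
        mult_ac) (rule sum.swap)
  have kernel: "z = 0\<^sub>v N" if z: "z \<in> carrier_vec N" "G *\<^sub>v z = 0\<^sub>v N" for z
  proof -
    \<comment> \<open>\<open>z\<^sup>T G z\<close> is the sum of the squares of the pairings of \<open>z\<close> with the \<open>v k\<close>.\<close>
    have "(\<Sum>k<m. (\<Sum>p<N. z $ p * v k p)\<^sup>2)
        = (\<Sum>k<m. \<Sum>p<N. z $ p * ((\<Sum>q<N. v k q * z $ q) * v k p))"
      by (simp add: power2_eq_square sum_distrib_left sum_distrib_right mult_ac)
    also have "\<dots> = (\<Sum>p<N. \<Sum>k<m. z $ p * ((\<Sum>q<N. v k q * z $ q) * v k p))"
      by (rule sum.swap)
    also have "\<dots> = (\<Sum>p<N. z $ p * (G *\<^sub>v z) $ p)"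
      using z(1) by (intro sum.cong) (simp_all add: G_mult sum_distrib_left)
    also have "\<dots> = 0"
      using z by simp
    finally have "\<forall>k<m. (\<Sum>p<N. z $ p * v k p) = 0"
      by (simp add: sum_nonneg_eq_0_iff)
    then have "\<forall>p<N. z $ p = 0"
      by (rule orth[of "\<lambda>p. z $ p"])
    with z show ?thesis
      by (intro eq_vecI) auto
  qed
  then obtain s where s: "s \<in> carrier_vec N" "G *\<^sub>v s = vec N w"
    using mult_mat_vec_surj_if_kernel_trivial[OF G kernel, of "vec N w"] by auto
  have "w p = (\<Sum>k<m. (\<Sum>q<N. v k q * s $ q) * v k p)" if "p < N" for p
  proof -
    have "w p = vec N w $ p"
      using that by simp
    also have "\<dots> = (G *\<^sub>v s) $ p"
      unfolding s(2) ..
    also have "\<dots> = (\<Sum>k<m. (\<Sum>q<N. v k q * s $ q) * v k p)"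
      by (rule G_mult[OF that s(1)])
    finally show ?thesis .
  qed
  then show ?thesis
    by (intro exI[of _ "\<lambda>k. \<Sum>q<N. v k q * s $ q"]) blast
qed

lemma orthogonal_complement_trivial_if_span:
  fixes v :: "nat \<Rightarrow> nat \<Rightarrow> real"
  assumes span: "\<exists>c. \<forall>p<N. t p = (\<Sum>k<m. c k * v k p)"
    and orth: "\<forall>k<m. (\<Sum>p<N. t p * v k p) = 0"
  shows "\<forall>p<N. t p = 0"
proof -
  obtain c where c: "\<forall>p<N. t p = (\<Sum>k<m. c k * v k p)"
    using span by blast
  have "(\<Sum>p<N. (t p)\<^sup>2) = (\<Sum>p<N. t p * (\<Sum>k<m. c k * v k p))"
    using c by (intro sum.cong) (simp_all add: power2_eq_square)
  also have "\<dots> = (\<Sum>p<N. \<Sum>k<m. c k * (t p * v k p))"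
    by (simp add: sum_distrib_left mult_ac)
  also have "\<dots> = (\<Sum>k<m. \<Sum>p<N. c k * (t p * v k p))"
    by (rule sum.swap)
  also have "\<dots> = (\<Sum>k<m. c k * (\<Sum>p<N. t p * v k p))"
    by (simp add: sum_distrib_left)
  also have "\<dots> = 0"
    using orth by simp
  finally show ?thesis
    by (simp add: sum_nonneg_eq_0_iff)
qed

lemma spans_Rn2_iff_orthogonal_complement_trivial:
  "spans_Rn2 n m v \<longleftrightarrow> (\<forall>t. (\<forall>k<m. (\<Sum>p<n\<^sup>2. t p * v k p) = 0) \<longrightarrow> (\<forall>p<n\<^sup>2. t p = 0))"
proof
  assume span: "spans_Rn2 n m v"
  show "\<forall>t. (\<forall>k<m. (\<Sum>p<n\<^sup>2. t p * v k p) = 0) \<longrightarrow> (\<forall>p<n\<^sup>2. t p = 0)"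
  proof (rule allI, rule impI)
    fix t assume orth: "\<forall>k<m. (\<Sum>p<n\<^sup>2. t p * v k p) = 0"
    have "\<exists>c. \<forall>p<n\<^sup>2. t p = (\<Sum>k<m. c k * v k p)"
      using span[unfolded spans_Rn2_def, rule_format, of "\<lambda>p. if p < n\<^sup>2 then t p else 0"] by simp
    from this orth show "\<forall>p<n\<^sup>2. t p = 0"
      by (rule orthogonal_complement_trivial_if_span)
  qed
next
  assume orth: "\<forall>t. (\<forall>k<m. (\<Sum>p<n\<^sup>2. t p * v k p) = 0) \<longrightarrow> (\<forall>p<n\<^sup>2. t p = 0)"
  show "spans_Rn2 n m v"
    unfolding spans_Rn2_def
  proof (intro allI impI)
    fix w
    show "\<exists>c. \<forall>p<n\<^sup>2. w p = (\<Sum>k<m. c k * v k p)"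
      by (rule span_if_orthogonal_complement_trivial) (use orth in blast)
  qed
qed

lemma diag_pos_Suc: "i < n \<Longrightarrow> diag_pos n (Suc i) = diag_pos n i + (2 * (n - i) - 1)"
proof -
  assume "i < n"
  then obtain k where n: "n = i + k + 1"
    using less_iff_Suc_add by auto
  then have "2 * n - Suc i = i + 2 * k + 1" "2 * n - i = i + 2 * k + 2" "2 * (n - i) - 1 = 2 * k + 1"
    by auto
  then show ?thesis
    unfolding diag_pos_def by (simp add: algebra_simps)
qed

lemma diag_pos_mono: "i \<le> j \<Longrightarrow> j \<le> n \<Longrightarrow> diag_pos n i \<le> diag_pos n j"
proof (induction j rule: dec_induct)
  case (step j)
  then show ?case
    using diag_pos_Suc[of j n] by simp
qed simp

lemma diag_pos_self: "diag_pos n n = n\<^sup>2"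
  by (simp add: diag_pos_def power2_eq_square)

text \<open>Every coordinate position of \<open>xtilde\<close> is \<open>diag_pos n i + a\<close> with \<open>a < 2 * (n - i) - 1\<close>,
  the length of block \<open>i\<close>; comparisons of positions reduce to comparisons of such pairs \<open>(i, a)\<close>.\<close>

lemma block_pos_less_diag_pos_Suc:
  "i < n \<Longrightarrow> a < 2 * (n - i) - 1 \<Longrightarrow> diag_pos n i + a < diag_pos n (Suc i)"
  using diag_pos_Suc by simp

lemma block_pos_less_square: "i < n \<Longrightarrow> a < 2 * (n - i) - 1 \<Longrightarrow> diag_pos n i + a < n\<^sup>2"
  using block_pos_less_diag_pos_Suc diag_pos_mono[of "Suc i" n n] diag_pos_self by fastforce

lemma block_pos_eq_iff:
  assumes "i < n" "i' < n" "a < 2 * (n - i) - 1" "a' < 2 * (n - i') - 1"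
  shows "diag_pos n i + a = diag_pos n i' + a' \<longleftrightarrow> i = i' \<and> a = a'"
proof -
  have "diag_pos n i + a < diag_pos n i' + a'" if "i < i'" "i' < n" "a < 2 * (n - i) - 1" for i i' a a'
    using block_pos_less_diag_pos_Suc[of i n a] diag_pos_mono[of "Suc i" i' n] that by simp
  with assms show ?thesis
    by (metis add_left_cancel less_irrefl_nat linorder_neqE_nat)
qed

lemma re_pos_eq: "i < j \<Longrightarrow> re_pos n i j = diag_pos n i + (2 * (j - i) - 1)"
  unfolding re_pos_def by simp

lemma diag_pos_less_square: "i < n \<Longrightarrow> diag_pos n i < n\<^sup>2"
  using block_pos_less_square[of i n 0] by simp

lemma re_pos_less_square: "i < j \<Longrightarrow> j < n \<Longrightarrow> re_pos n i j < n\<^sup>2"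
  unfolding re_pos_eq by (rule block_pos_less_square) auto

lemma im_pos_less_square: "i < j \<Longrightarrow> j < n \<Longrightarrow> im_pos n i j < n\<^sup>2"
  unfolding im_pos_def by (rule block_pos_less_square) auto

lemma diag_pos_eq_iff: "i < n \<Longrightarrow> i' < n \<Longrightarrow> diag_pos n i = diag_pos n i' \<longleftrightarrow> i = i'"
  using block_pos_eq_iff[of i n i' 0 0] by simp

lemma re_pos_eq_iff:
  "i < j \<Longrightarrow> j < n \<Longrightarrow> i' < j' \<Longrightarrow> j' < n \<Longrightarrow> re_pos n i j = re_pos n i' j' \<longleftrightarrow> i = i' \<and> j = j'"
  unfolding re_pos_eq by (subst block_pos_eq_iff) auto

lemma im_pos_eq_iff:
  "i < j \<Longrightarrow> j < n \<Longrightarrow> i' < j' \<Longrightarrow> j' < n \<Longrightarrow> im_pos n i j = im_pos n i' j' \<longleftrightarrow> i = i' \<and> j = j'"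
  unfolding im_pos_def by (subst block_pos_eq_iff) auto

lemma diag_pos_neq_re_pos: "i < n \<Longrightarrow> i' < j' \<Longrightarrow> j' < n \<Longrightarrow> diag_pos n i \<noteq> re_pos n i' j'"
  using block_pos_eq_iff[of i n i' 0 "2 * (j' - i') - 1"] unfolding re_pos_eq by auto

lemma diag_pos_neq_im_pos: "i < n \<Longrightarrow> i' < j' \<Longrightarrow> j' < n \<Longrightarrow> diag_pos n i \<noteq> im_pos n i' j'"
  using block_pos_eq_iff[of i n i' 0 "2 * (j' - i')"] unfolding im_pos_def by auto

lemma re_pos_neq_im_pos:
  assumes "i < j" "j < n" "i' < j'" "j' < n"
  shows "re_pos n i j \<noteq> im_pos n i' j'"
proof -
  have "2 * (j - i) - 1 \<noteq> 2 * (j' - i')"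
    using assms(1) by presburger
  moreover have "2 * (j - i) - 1 < 2 * (n - i) - 1" "2 * (j' - i') < 2 * (n - i') - 1"
    using assms by auto
  ultimately have "diag_pos n i + (2 * (j - i) - 1) \<noteq> diag_pos n i' + 2 * (j' - i')"
    using assms block_pos_eq_iff by simp
  then show ?thesis
    unfolding re_pos_eq[OF assms(1)] im_pos_def .
qed

lemma diag_pos_block:
  "k \<le> n \<Longrightarrow> p < diag_pos n k \<Longrightarrow> \<exists>i<k. diag_pos n i \<le> p \<and> p < diag_pos n (Suc i)"
proof (induction k)
  case (Suc k)
  then show ?case
    by (cases "p < diag_pos n k") (auto intro: less_SucI)
qed (simp add: diag_pos_def)

lemma xtilde_pos_cases:
  assumes "p < n\<^sup>2"
  obtains (diag) i where "i < n" "p = diag_pos n i"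
    | (re) i j where "i < j" "j < n" "p = re_pos n i j"
    | (im) i j where "i < j" "j < n" "p = im_pos n i j"
proof -
  obtain i where i: "i < n" "diag_pos n i \<le> p" "p < diag_pos n (Suc i)"
    using diag_pos_block[of n n p] assms diag_pos_self by auto
  define a where "a = p - diag_pos n i"
  have p: "p = diag_pos n i + a" and a: "a < 2 * (n - i) - 1"
    using i diag_pos_Suc[OF i(1)] unfolding a_def by auto
  show thesis
  proof (cases "a = 0")
    case True
    with i p show thesis
      by (intro diag) auto
  next
    case a_pos: False
    show thesis
    proof (cases "even a")
      case True
      then obtain d where "a = 2 * d"
        by blast
      with a_pos a p show thesis
        by (intro im[of i "i + d"]) (auto simp: im_pos_def)
    next
      case False
      then obtain d where "a = 2 * d + 1"
        by (blast elim: oddE)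
      with a p show thesis
        by (intro re[of i "i + d + 1"]) (auto simp: re_pos_eq)
    qed
  qed
qed

definition coord_vec ::
    "nat \<Rightarrow> (nat \<Rightarrow> real) \<Rightarrow> (nat \<Rightarrow> nat \<Rightarrow> real) \<Rightarrow> (nat \<Rightarrow> nat \<Rightarrow> real) \<Rightarrow> nat \<Rightarrow> real" where
  "coord_vec n d r s p = (\<Sum>i<n. (if p = diag_pos n i then d i else 0)
      + (\<Sum>j\<in>{i<..<n}. (if p = re_pos n i j then r i j else 0)
                      + (if p = im_pos n i j then s i j else 0)))"

lemma xtilde_eq_coord_vec:
  "xtilde n u = coord_vec n (\<lambda>i. (cmod (u i))\<^sup>2) (\<lambda>i j. Re (cnj (u i) * u j)) (\<lambda>i j. Im (cnj (u i) * u j))"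
  unfolding xtilde_def coord_vec_def by (rule refl)

lemma coord_vec_diag_pos:
  assumes "i < n"
  shows "coord_vec n d r s (diag_pos n i) = d i"
proof -
  have "coord_vec n d r s (diag_pos n i) = (\<Sum>i'<n. if i' = i then d i else 0)"
    unfolding coord_vec_def using assms
    by (intro sum.cong)
      (auto simp: diag_pos_eq_iff diag_pos_neq_re_pos diag_pos_neq_im_pos intro!: sum.neutral)
  with assms show ?thesis
    by simp
qed

lemma sum_upper_pairs_delta:
  fixes i j n :: nat
  assumes "i < j" "j < n"
  shows "(\<Sum>i'<n. \<Sum>j'\<in>{i'<..<n}. if i' = i \<and> j' = j then c else 0) = c"
proof -
  have "(\<Sum>j'\<in>{i'<..<n}. if i' = i \<and> j' = j then c else 0) = (if i' = i then c else 0)" for i'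
    using assms by (cases "i' = i") simp_all
  with assms show ?thesis
    by simp
qed

lemma coord_vec_re_pos:
  assumes "i < j" "j < n"
  shows "coord_vec n d r s (re_pos n i j) = r i j"
proof -
  have "coord_vec n d r s (re_pos n i j)
      = (\<Sum>i'<n. \<Sum>j'\<in>{i'<..<n}. if i' = i \<and> j' = j then r i j else 0)"
    unfolding coord_vec_def using assms
    by (intro sum.cong)
      (auto simp: re_pos_eq_iff re_pos_neq_im_pos diag_pos_neq_re_pos[symmetric] intro!: sum.cong)
  with assms show ?thesis
    by (simp add: sum_upper_pairs_delta)
qed

lemma coord_vec_im_pos:
  assumes "i < j" "j < n"
  shows "coord_vec n d r s (im_pos n i j) = s i j"
proof -
  have "coord_vec n d r s (im_pos n i j)
      = (\<Sum>i'<n. \<Sum>j'\<in>{i'<..<n}. if i' = i \<and> j' = j then s i j else 0)"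
    unfolding coord_vec_def using assms
    by (intro sum.cong)
      (auto simp: im_pos_eq_iff re_pos_neq_im_pos[symmetric] diag_pos_neq_im_pos[symmetric]
        intro!: sum.cong)
  with assms show ?thesis
    by (simp add: sum_upper_pairs_delta)
qed

lemma sum_mult_coord_vec:
  "(\<Sum>p<n\<^sup>2. t p * coord_vec n d r s p) =
   (\<Sum>i<n. t (diag_pos n i) * d i
      + (\<Sum>j\<in>{i<..<n}. t (re_pos n i j) * r i j + t (im_pos n i j) * s i j))"
proof -
  have delta: "(\<Sum>p<n\<^sup>2. t p * (if p = q then c else 0)) = t q * c" if "q < n\<^sup>2" for q c
    using that by (simp add: if_distrib sum.delta cong: if_cong)
  have "(\<Sum>p<n\<^sup>2. t p * coord_vec n d r s p) =
      (\<Sum>i<n. (\<Sum>p<n\<^sup>2. t p * (if p = diag_pos n i then d i else 0))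
        + (\<Sum>j\<in>{i<..<n}. (\<Sum>p<n\<^sup>2. t p * (if p = re_pos n i j then r i j else 0))
                        + (\<Sum>p<n\<^sup>2. t p * (if p = im_pos n i j then s i j else 0))))"
    unfolding coord_vec_def
    by (simp add: sum_distrib_left distrib_left sum.distrib sum.swap[of _ "{..<n\<^sup>2}"])
  also have "\<dots> = (\<Sum>i<n. t (diag_pos n i) * d i
      + (\<Sum>j\<in>{i<..<n}. t (re_pos n i j) * r i j + t (im_pos n i j) * s i j))"
    by (intro sum.cong refl arg_cong2[where f = "(+)"])
      (auto simp: delta diag_pos_less_square re_pos_less_square im_pos_less_square)
  finally show ?thesis .
qed

lemma sum_square_diag_upper:
  fixes f :: "nat \<Rightarrow> nat \<Rightarrow> 'a :: comm_monoid_add"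
  shows "(\<Sum>i<n. \<Sum>j<n. f i j) = (\<Sum>i<n. f i i + (\<Sum>j\<in>{i<..<n}. f i j + f j i))"
proof (induction n)
  case (Suc n)
  have "{i<..<Suc n} = insert n {i<..<n}" if "i < n" for i
    using that by auto
  then have extend: "(\<Sum>i<n. f i i + (\<Sum>j\<in>{i<..<n}. f i j + f j i)) + (\<Sum>i<n. f i n + f n i)
      = (\<Sum>i<n. f i i + (\<Sum>j\<in>{i<..<Suc n}. f i j + f j i))"
    by (simp add: sum.distrib add_ac)
  have empty: "{n<..<Suc n} = {}"
    by auto
  have "(\<Sum>i<Suc n. \<Sum>j<Suc n. f i j) = (\<Sum>i<n. \<Sum>j<n. f i j) + (\<Sum>i<n. f i n + f n i) + f n n"
    by (simp add: sum.distrib add_ac)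
  also have "\<dots> = (\<Sum>i<n. f i i + (\<Sum>j\<in>{i<..<Suc n}. f i j + f j i)) + f n n"
    unfolding Suc.IH extend ..
  also have "\<dots> = (\<Sum>i<Suc n. f i i + (\<Sum>j\<in>{i<..<Suc n}. f i j + f j i))"
    using empty by simp
  finally show ?case .
qed simp

text \<open>The factors \<open>2\<close> and \<open>-2\<close> account for the two off-diagonal entries \<open>T i j\<close>, \<open>T j i\<close>
  that contribute to each \<open>Re\<close> / \<open>Im\<close> coordinate of \<open>xtilde\<close> in \<open>\<langle>T u, u\<rangle>\<close>.\<close>

definition herm_coords :: "nat \<Rightarrow> (nat \<Rightarrow> nat \<Rightarrow> complex) \<Rightarrow> nat \<Rightarrow> real" where
  "herm_coords n T = coord_vec n (\<lambda>i. Re (T i i)) (\<lambda>i j. 2 * Re (T i j)) (\<lambda>i j. - 2 * Im (T i j))"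

definition herm_of_coords :: "nat \<Rightarrow> (nat \<Rightarrow> real) \<Rightarrow> nat \<Rightarrow> nat \<Rightarrow> complex" where
  "herm_of_coords n t i j =
     (if i = j then complex_of_real (t (diag_pos n i))
      else if i < j then Complex (t (re_pos n i j) / 2) (- t (im_pos n i j) / 2)
      else Complex (t (re_pos n j i) / 2) (t (im_pos n j i) / 2))"

lemma self_adjoint_herm_of_coords: "self_adjoint_n n (herm_of_coords n t)"
  unfolding self_adjoint_n_def herm_of_coords_def by (auto simp: complex_eq_iff)

lemma herm_coords_herm_of_coords: "p < n\<^sup>2 \<Longrightarrow> herm_coords n (herm_of_coords n t) p = t p"
  by (elim xtilde_pos_cases)
    (auto simp: herm_coords_def herm_of_coords_def coord_vec_diag_pos coord_vec_re_pos coord_vec_im_pos)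

lemma herm_coords_eq_0_iff:
  assumes "self_adjoint_n n T"
  shows "(\<forall>p<n\<^sup>2. herm_coords n T p = 0) \<longleftrightarrow> (\<forall>i<n. \<forall>j<n. T i j = 0)"
proof
  assume coords: "\<forall>p<n\<^sup>2. herm_coords n T p = 0"
  have diag: "T i i = 0" if "i < n" for i
  proof -
    have "Re (T i i) = 0"
      using coords[rule_format, OF diag_pos_less_square[OF that]]
      unfolding herm_coords_def coord_vec_diag_pos[OF that] .
    moreover have "T i i = cnj (T i i)"
      using assms that unfolding self_adjoint_n_def by blast
    then have "Im (T i i) = 0"
      by (metis cnj.sel(2) neg_equal_zero)
    ultimately show ?thesis
      by (simp add: complex_eq_iff)
  qed
  have upper: "T i j = 0" if "i < j" "j < n" for i j
  proof -
    have "2 * Re (T i j) = 0"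
      using coords[rule_format, OF re_pos_less_square[OF that]]
      unfolding herm_coords_def coord_vec_re_pos[OF that] .
    moreover have "- 2 * Im (T i j) = 0"
      using coords[rule_format, OF im_pos_less_square[OF that]]
      unfolding herm_coords_def coord_vec_im_pos[OF that] .
    ultimately show ?thesis
      by (simp add: complex_eq_iff)
  qed
  show "\<forall>i<n. \<forall>j<n. T i j = 0"
  proof (intro allI impI)
    fix i j assume ij: "i < n" "j < n"
    consider "i = j" | "i < j" | "j < i"
      by linarith
    then show "T i j = 0"
    proof cases
      case 3
      have "T i j = cnj (T j i)"
        using assms ij unfolding self_adjoint_n_def by blast
      with upper[OF 3 ij(1)] show ?thesis
        by simp
    next
      case 1
      with diag ij show ?thesis
        by blast
    next
      case 2
      with upper ij show ?thesis
        by blast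
    qed
  qed
next
  assume "\<forall>i<n. \<forall>j<n. T i j = 0"
  then have "herm_coords n T = coord_vec n (\<lambda>_. 0) (\<lambda>_ _. 0) (\<lambda>_ _. 0)"
    unfolding herm_coords_def coord_vec_def by (intro ext sum.cong refl arg_cong2[where f = "(+)"]) auto
  then show "\<forall>p<n\<^sup>2. herm_coords n T p = 0"
    by (simp add: coord_vec_def)
qed

lemma mult_add_cnj_mult:
  "a * w + cnj a * cnj w = complex_of_real (2 * Re a * Re w - 2 * Im a * Im w)"
  by (simp add: complex_eq_iff)

lemma cinner_mat_apply_self_adjoint:
  assumes "self_adjoint_n n T"
  shows "cinner_n n (mat_apply n T u) u
    = complex_of_real (\<Sum>p<n\<^sup>2. herm_coords n T p * xtilde n u p)"
proof -
  have adj: "T j i = cnj (T i j)" if "i < n" "j < n" for i j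
  proof -
    have "T i j = cnj (T j i)"
      using assms that unfolding self_adjoint_n_def by blast
    then show ?thesis
      by simp
  qed
  have "cinner_n n (mat_apply n T u) u = (\<Sum>i<n. \<Sum>j<n. T i j * u j * cnj (u i))"
    unfolding cinner_n_def mat_apply_def by (simp add: sum_distrib_right)
  also have "\<dots> = (\<Sum>i<n. T i i * u i * cnj (u i)
      + (\<Sum>j\<in>{i<..<n}. T i j * u j * cnj (u i) + T j i * u i * cnj (u j)))"
    by (rule sum_square_diag_upper)
  also have "\<dots> = (\<Sum>i<n. complex_of_real (Re (T i i) * (cmod (u i))\<^sup>2
      + (\<Sum>j\<in>{i<..<n}. 2 * Re (T i j) * Re (cnj (u i) * u j) + - 2 * Im (T i j) * Im (cnj (u i) * u j))))"
  proof (intro sum.cong refl)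
    fix i assume "i \<in> {..<n}"
    then have i: "i < n"
      by simp
    have "Im (T i i) = 0"
      using adj[OF i i] by (metis cnj.sel(2) neg_equal_zero)
    then have diag: "T i i * u i * cnj (u i) = complex_of_real (Re (T i i) * (cmod (u i))\<^sup>2)"
      by (simp add: complex_eq_iff cmod_power2) (simp add: power2_eq_square algebra_simps)
    have "T i j * u j * cnj (u i) + T j i * u i * cnj (u j)
        = complex_of_real (2 * Re (T i j) * Re (cnj (u i) * u j) + - 2 * Im (T i j) * Im (cnj (u i) * u j))"
      if "j \<in> {i<..<n}" for j
    proof -
      have "j < n"
        using that by simp
      then have "T j i = cnj (T i j)"
        by (rule adj[OF i])
      then show ?thesis
        using mult_add_cnj_mult[of "T i j" "cnj (u i) * u j"] by (simp add: mult_ac)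
    qed
    then have "(\<Sum>j\<in>{i<..<n}. T i j * u j * cnj (u i) + T j i * u i * cnj (u j))
        = (\<Sum>j\<in>{i<..<n}. complex_of_real
            (2 * Re (T i j) * Re (cnj (u i) * u j) + - 2 * Im (T i j) * Im (cnj (u i) * u j)))"
      by (rule sum.cong[OF refl])
    with diag show "T i i * u i * cnj (u i)
        + (\<Sum>j\<in>{i<..<n}. T i j * u j * cnj (u i) + T j i * u i * cnj (u j))
      = complex_of_real (Re (T i i) * (cmod (u i))\<^sup>2 + (\<Sum>j\<in>{i<..<n}.
          2 * Re (T i j) * Re (cnj (u i) * u j) + - 2 * Im (T i j) * Im (cnj (u i) * u j)))"
      by (simp only: of_real_add of_real_sum)
  qed
  also have "\<dots> = complex_of_real (\<Sum>p<n\<^sup>2. herm_coords n T p * xtilde n u p)"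
    unfolding xtilde_eq_coord_vec sum_mult_coord_vec of_real_sum
    by (intro sum.cong refl arg_cong[where f = complex_of_real] arg_cong2[where f = "(+)"])
      (auto simp: herm_coords_def coord_vec_diag_pos coord_vec_re_pos coord_vec_im_pos)
  finally show ?thesis .
qed

lemma injective_family_iff_orthogonal_complement_trivial:
  "injective_family n m x \<longleftrightarrow>
     (\<forall>t. (\<forall>k<m. (\<Sum>p<n\<^sup>2. t p * xtilde n (x k) p) = 0) \<longrightarrow> (\<forall>p<n\<^sup>2. t p = 0))"
proof
  assume inj: "injective_family n m x"
  show "\<forall>t. (\<forall>k<m. (\<Sum>p<n\<^sup>2. t p * xtilde n (x k) p) = 0) \<longrightarrow> (\<forall>p<n\<^sup>2. t p = 0)"
  proof (rule allI, rule impI)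
    fix t assume orth: "\<forall>k<m. (\<Sum>p<n\<^sup>2. t p * xtilde n (x k) p) = 0"
    define T where "T = herm_of_coords n t"
    have sa: "self_adjoint_n n T"
      unfolding T_def by (rule self_adjoint_herm_of_coords)
    have "cinner_n n (mat_apply n T (x k)) (x k) = 0" if "k < m" for k
    proof -
      have "(\<Sum>p<n\<^sup>2. herm_coords n T p * xtilde n (x k) p) = (\<Sum>p<n\<^sup>2. t p * xtilde n (x k) p)"
        unfolding T_def by (intro sum.cong) (simp_all add: herm_coords_herm_of_coords)
      with orth that show ?thesis
        by (simp add: cinner_mat_apply_self_adjoint[OF sa])
    qed
    with inj sa have "\<forall>i<n. \<forall>j<n. T i j = 0"
      unfolding injective_family_def by blast
    with sa have "\<forall>p<n\<^sup>2. herm_coords n T p = 0"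
      by (simp add: herm_coords_eq_0_iff)
    then show "\<forall>p<n\<^sup>2. t p = 0"
      unfolding T_def by (simp add: herm_coords_herm_of_coords)
  qed
next
  assume orth_trivial:
    "\<forall>t. (\<forall>k<m. (\<Sum>p<n\<^sup>2. t p * xtilde n (x k) p) = 0) \<longrightarrow> (\<forall>p<n\<^sup>2. t p = 0)"
  show "injective_family n m x"
    unfolding injective_family_def
  proof (rule allI, intro impI)
    fix T assume sa: "self_adjoint_n n T"
      and forms: "\<forall>k<m. cinner_n n (mat_apply n T (x k)) (x k) = 0"
    then have "\<forall>k<m. (\<Sum>p<n\<^sup>2. herm_coords n T p * xtilde n (x k) p) = 0"
      by (simp only: cinner_mat_apply_self_adjoint of_real_eq_0_iff)
    with orth_trivial have "\<forall>p<n\<^sup>2. herm_coords n T p = 0"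
      by blast
    with sa show "\<forall>i<n. \<forall>j<n. T i j = 0"
      by (simp add: herm_coords_eq_0_iff)
  qed
qed

theorem mainTheorem2:
  fixes n m :: nat and x :: "nat \<Rightarrow> nat \<Rightarrow> complex"
  assumes "is_frame n m x"
  shows "injective_family n m x \<longleftrightarrow> spans_Rn2 n m (\<lambda>k. xtilde n (x k))"
  unfolding injective_family_iff_orthogonal_complement_trivial
    spans_Rn2_iff_orthogonal_complement_trivial ..

end
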